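(* Let $d\ge2$, $N\in\mathbb N$ and $\theta>0$. Let $\{X(t)\}_{t\ge0}$ be the $d$-types Wright–Fisher diffusion with symmetric parent-independent mutation at rate $\theta$, and $\{k(t)\}_{t\ge0}$ the $d$-types Moran model with population size $N$ and symmetric parent-independent mutation at rate $\theta$. Define, for $x=(x_1,\dots,x_{d-1})$ in the simplex and $k=(k_1,\dots,k_{d-1})\in\mathbb N_0^{d-1}$ with $\sum_jk_j\le N$, $\tilde D_N(x,k)=\prod_{i=1}^d\frac{x_i^{k_i}}{\Gamma(\frac{2\theta}{d-1}+k_i)}$, where $x_d=1-\sum_{j=1}^{d-1}x_j$ and $k_d=N-\sum_{j=1}^{d-1}k_j$. Then these two processes are dual with duality function $\tilde D_N$: for all such $x,k$ and all $t>0$, $\mathbb E_x\tilde D_N(X(t),k)=\widehat{\mathbb E}_k\tilde D_N(x,k(t))$.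
   Context: $\mathbb N_0=\{0,1,2,\dots\}$, $e_i$ the $i$-th unit vector. The $d$-types Wright–Fisher model with symmetric parent-independent mutation at rate $\theta$ is the diffusion on the simplex $\{x\in\mathbb R^{d-1}:x_i\ge0,\ \sum_ix_i\le1\}$ with generator $\mathscr L^{WF}_{d,\theta}g(x)=\sum_{i=1}^{d-1}\frac12x_i(1-x_i)\partial^2_{x_i}g(x)-\sum_{1\le i<j\le d-1}x_ix_j\partial_{x_i}\partial_{x_j}g(x)+\frac{\theta}{d-1}\sum_{i=1}^{d-1}(1-dx_i)\partial_{x_i}g(x)$. The $d$-types Moran model with population size $N$ and symmetric parent-independent mutation at rate $\theta$ is the Markov process on $\{k\in\mathbb N_0^{d-1}:\sum_jk_j\le N\}$ with generator $\mathscr L^{Mor}_{N,d,\theta}g(k)=\frac12\sum_{1\le i<j\le d-1}\big[k_i(k_j+\frac{2\theta}{d-1})(g(k-e_i+e_j)-g(k))+k_j(k_i+\frac{2\theta}{d-1})(g(k+e_i-e_j)-g(k))\big]+\frac12\sum_{i=1}^{d-1}\big[(N-\sum_{j=1}^{d-1}k_j)(k_i+\frac{2\theta}{d-1})(g(k+e_i)-g(k))+k_i(N-\sum_{j=1}^{d-1}k_j+\frac{2\theta}{d-1})(g(k-e_i)-g(k))\big]$. $\mathbb E_x$ and $\widehat{\mathbb E}_k$ denote expectations for the respective processes started at $x$ and $k$. *)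

theory Defs
  imports "HOL-Probability.Probability"
begin

text \<open>Coordinates x_1..x_(d-1) are indexed by a finite linearly ordered type 'n::{finite,linorder},
  so d = CARD('n::{finite,linorder}) + 1 \<ge> 2.\<close>

definition wf_simplex :: "(real ^ 'n::{finite,linorder}) set" where
  "wf_simplex = {x. (\<forall>i. 0 \<le> x $ i) \<and> (\<Sum>i\<in>UNIV. x $ i) \<le> 1}"

definition moran_states :: "nat \<Rightarrow> ('n::{finite,linorder} \<Rightarrow> nat) set" where
  "moran_states N = {k. (\<Sum>i\<in>UNIV. k i) \<le> N}"

definition part :: "'n::{finite,linorder} \<Rightarrow> (real ^ 'n::{finite,linorder} \<Rightarrow> real) \<Rightarrow> real ^ 'n::{finite,linorder} \<Rightarrow> real" where
  "part i g x = deriv (\<lambda>h. g (x + h *\<^sub>R axis i 1)) 0"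

definition wf_gen :: "real \<Rightarrow> (real ^ 'n::{finite,linorder} \<Rightarrow> real) \<Rightarrow> real ^ 'n::{finite,linorder} \<Rightarrow> real" where
  "wf_gen \<theta> g x =
     (let d = real (CARD('n::{finite,linorder}) + 1) in
       (\<Sum>i\<in>UNIV. 1/2 * x$i * (1 - x$i) * part i (part i g) x)
       - (\<Sum>(i,j)\<in>{(i,j). i < j}. x$i * x$j * part i (part j g) x)
       + \<theta> / (d - 1) * (\<Sum>i\<in>UNIV. (1 - d * x$i) * part i g x))"

definition moran_gen :: "nat \<Rightarrow> real \<Rightarrow> (('n::{finite,linorder} \<Rightarrow> nat) \<Rightarrow> real) \<Rightarrow> ('n::{finite,linorder} \<Rightarrow> nat) \<Rightarrow> real" where
  "moran_gen N \<theta> g k =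
     (let d = real (CARD('n::{finite,linorder}) + 1); c = 2 * \<theta> / (d - 1); r = real N - real (\<Sum>j\<in>UNIV. k j) in
       1/2 * (\<Sum>(i,j)\<in>{(i,j). i < j}.
           real (k i) * (real (k j) + c) * (g (k(i := k i - 1, j := k j + 1)) - g k)
         + real (k j) * (real (k i) + c) * (g (k(i := k i + 1, j := k j - 1)) - g k))
     + 1/2 * (\<Sum>i\<in>UNIV.
           r * (real (k i) + c) * (g (k(i := k i + 1)) - g k)
         + real (k i) * (r + c) * (g (k(i := k i - 1)) - g k)))"

definition monomial :: "('n::{finite,linorder} \<Rightarrow> nat) \<Rightarrow> real ^ 'n::{finite,linorder} \<Rightarrow> real" where
  "monomial m x = (\<Prod>i\<in>UNIV. (x $ i) ^ m i)"

definition dual_fun :: "nat \<Rightarrow> real \<Rightarrow> real ^ 'n::{finite,linorder} \<Rightarrow> ('n::{finite,linorder} \<Rightarrow> nat) \<Rightarrow> real" where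
  "dual_fun N \<theta> x k =
     (let d = real (CARD('n::{finite,linorder}) + 1); c = 2 * \<theta> / (d - 1);
          xd = 1 - (\<Sum>j\<in>UNIV. x $ j); kd = N - (\<Sum>j\<in>UNIV. k j) in
       (\<Prod>i\<in>UNIV. (x $ i) ^ k i / Gamma (c + real (k i))) * (xd ^ kd / Gamma (c + real kd)))"

text \<open>P is (the transition kernel family of) the Wright-Fisher diffusion:
  E_x f(X(t)) = integral of f w.r.t. P t x.\<close>
definition is_WF_diffusion :: "real \<Rightarrow> (real \<Rightarrow> real ^ 'n::{finite,linorder} \<Rightarrow> (real ^ 'n::{finite,linorder}) measure) \<Rightarrow> bool" where
  "is_WF_diffusion \<theta> P \<longleftrightarrow>
     (\<forall>x\<in>wf_simplex. \<forall>t\<ge>0. prob_space (P t x) \<and> sets (P t x) = sets borel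
                        \<and> (AE y in P t x. y \<in> wf_simplex)) \<and>
     (\<forall>x\<in>wf_simplex. P 0 x = return borel x) \<and>
     (\<forall>x\<in>wf_simplex. \<forall>t\<ge>0. \<forall>m.
        ((\<lambda>s. \<integral>y. monomial m y \<partial>P s x) has_real_derivative
           (\<integral>y. wf_gen \<theta> (monomial m) y \<partial>P t x)) (at t within {0..}))"

text \<open>p is (the transition probability family of) the Moran model:
  hat E_k g(k(t)) = expectation of g w.r.t. p t k.\<close>
definition is_Moran_model :: "nat \<Rightarrow> real \<Rightarrow> (real \<Rightarrow> ('n::{finite,linorder} \<Rightarrow> nat) \<Rightarrow> ('n::{finite,linorder} \<Rightarrow> nat) pmf) \<Rightarrow> bool" where
  "is_Moran_model N \<theta> p \<longleftrightarrow>
     (\<forall>k\<in>moran_states N. \<forall>t\<ge>0. set_pmf (p t k) \<subseteq> moran_states N) \<and>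
     (\<forall>k\<in>moran_states N. p 0 k = return_pmf k) \<and>
     (\<forall>k\<in>moran_states N. \<forall>t\<ge>0. \<forall>g.
        ((\<lambda>s. measure_pmf.expectation (p s k) g) has_real_derivative
           measure_pmf.expectation (p t k) (moran_gen N \<theta> g)) (at t within {0..}))"

end

(*
  Write D for the duality function. Away from the coordinate hyperplanes, dividing by D turns
  the Wright-Fisher generator applied to D(., k) at x and the Moran generator applied to D(x, .)
  at k into explicit rational functions of x and k, and these coincide; since both sides are
  polynomial in x, the generator identity holds everywhere on the simplex. Consequently
  u(s, l) = E_x D(X(s), l) solves the forward equation of the Moran model, the defining
  derivative condition of the diffusion extending from monomials to polynomials by linearity.
  Then s \<mapsto> \<Sum>_l P_k(k(t - s) = l) u(s, l) has zero derivative on (0, t), and its values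
  at s = t and s = 0 are the two sides of the duality.
*)

theory Submission
  imports Defs
begin

section \<open>Monomials in the d coordinates\<close>

definition last_coord :: "real ^ 'n::finite \<Rightarrow> real" where
  "last_coord w = 1 - (\<Sum>j\<in>UNIV. w $ j)"

definition full_monomial :: "('n::{finite,linorder} \<Rightarrow> nat) \<Rightarrow> nat \<Rightarrow> real ^ 'n::{finite,linorder} \<Rightarrow> real" where
  "full_monomial a b w = monomial a w * last_coord w ^ b"

lemma axis_shift_nth: "(w + h *\<^sub>R axis j (1::real)) $ i = w $ i + (if i = j then h else 0)"
  by (simp add: axis_def)

lemma last_coord_axis_shift: "last_coord (w + h *\<^sub>R axis j (1::real)) = last_coord w - h"
proof -
  have "(\<Sum>i\<in>UNIV. (w + h *\<^sub>R axis j 1) $ i) = (\<Sum>i\<in>UNIV. w $ i + (if i = j then h else 0))"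
    by (rule sum.cong) (auto simp: axis_def)
  also have "\<dots> = (\<Sum>i\<in>UNIV. w $ i) + h" by (simp add: sum.distrib)
  finally show ?thesis by (simp add: last_coord_def)
qed

lemma monomial_split:
  "monomial a w = (w $ j) ^ a j * (\<Prod>i\<in>UNIV-{j}. (w $ i) ^ a i)"
  unfolding monomial_def by (simp add: prod.remove)

lemma full_monomial_axis_deriv:
  "((\<lambda>h. full_monomial a b (w + h *\<^sub>R axis j 1)) has_real_derivative
     real (a j) * full_monomial (a(j := a j - 1)) b w - real b * full_monomial a (b - 1) w) (at 0)"
proof -
  define R where "R = (\<Prod>i\<in>UNIV-{j}. (w $ i) ^ a i)"
  have other_coords: "(\<Prod>i\<in>UNIV-{j}. (w $ i) ^ (a(j := e)) i) = R" for e
    unfolding R_def by (rule prod.cong) auto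
  have shifted: "full_monomial a b (w + h *\<^sub>R axis j 1) = (w $ j + h) ^ a j * R * (last_coord w - h) ^ b" for h
  proof -
    have "(\<Prod>i\<in>UNIV-{j}. ((w + h *\<^sub>R axis j 1) $ i) ^ a i) = R"
      unfolding R_def by (rule prod.cong) (auto simp: axis_def)
    then show ?thesis
      unfolding full_monomial_def last_coord_axis_shift monomial_split[of _ _ j]
      by (simp add: axis_shift_nth)
  qed
  have deriv: "((\<lambda>h. (w $ j + h) ^ a j * R * (last_coord w - h) ^ b) has_real_derivative
      real (a j) * (w $ j + 0) ^ (a j - 1) * 1 * R * (last_coord w - 0) ^ b
      + (w $ j + 0) ^ a j * R * (real b * (last_coord w - 0) ^ (b - 1) * (0 - 1))) (at 0)"
    by (intro derivative_eq_intros) auto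
  then show ?thesis
    unfolding shifted by (simp add: full_monomial_def monomial_split[of _ _ j] other_coords algebra_simps R_def)
qed

lemma part_full_monomial:
  "part j (full_monomial a b) =
     (\<lambda>w. real (a j) * full_monomial (a(j := a j - 1)) b w - real b * full_monomial a (b - 1) w)"
  unfolding part_def by (rule ext, rule DERIV_imp_deriv, rule full_monomial_axis_deriv)

lemma full_monomial_lower_coord:
  assumes "w $ j \<noteq> 0"
  shows "real (a j) * full_monomial (a(j := a j - 1)) b w = real (a j) * full_monomial a b w / w $ j"
proof (cases "a j = 0")
  case False
  have "(\<Prod>i\<in>UNIV-{j}. (w $ i) ^ (a(j := a j - 1)) i) = (\<Prod>i\<in>UNIV-{j}. (w $ i) ^ a i)"
    by (rule prod.cong) auto
  moreover have "(w $ j) ^ a j = w $ j * (w $ j) ^ (a j - 1)"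
    using False by (metis Suc_pred' neq0_conv power_Suc)
  ultimately have "full_monomial a b w = w $ j * full_monomial (a(j := a j - 1)) b w"
    unfolding full_monomial_def monomial_split[of _ _ j] by simp
  then show ?thesis using assms by simp
qed simp

lemma full_monomial_lower_last:
  assumes "last_coord w \<noteq> 0"
  shows "real b * full_monomial a (b - 1) w = real b * full_monomial a b w / last_coord w"
proof (cases "b = 0")
  case False
  then have "full_monomial a b w = last_coord w * full_monomial a (b - 1) w"
    unfolding full_monomial_def by (metis Suc_pred' neq0_conv power_Suc mult.left_commute)
  then show ?thesis using assms by simp
qed simp

lemma part_full_monomial_generic:
  assumes "\<And>i. w $ i \<noteq> 0" "last_coord w \<noteq> 0"
  shows "part j (full_monomial a b) w = full_monomial a b w * (real (a j) / w $ j - real b / last_coord w)"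
  unfolding part_full_monomial full_monomial_lower_coord[OF assms(1)] full_monomial_lower_last[OF assms(2)]
  by (simp add: field_simps)

lemma second_log_derivative_identity:
  fixes Ai Aj A' B B1 D x y z :: real
  assumes "x \<noteq> 0" "y \<noteq> 0" "z \<noteq> 0" "Aj * A' = Ai * Aj - D * x * y" "B * B1 = B * B - B"
  shows "Aj / y * (A' / x - B / z) - B / z * (Ai / x - B1 / z)
      = (Ai / x - B / z) * (Aj / y - B / z) - D - B / z^2"
proof -
  have "Aj / y * (A' / x - B / z) - B / z * (Ai / x - B1 / z)
      = (Aj * A') / (x * y) - Aj * B / (y * z) - B * Ai / (z * x) + (B * B1) / (z * z)"
    using assms by (simp add: field_simps)
  also have "\<dots> = (Ai / x - B / z) * (Aj / y - B / z) - D - B / z^2"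
    unfolding assms(4,5) using assms(1-3) by (simp add: field_simps power2_eq_square)
  finally show ?thesis .
qed

lemma part_part_full_monomial_generic:
  fixes a :: "'n::{finite,linorder} \<Rightarrow> nat" and b :: nat and w :: "real ^ 'n::{finite,linorder}"
  assumes w: "\<And>i. w $ i \<noteq> 0" and z: "last_coord w \<noteq> 0"
  defines "F \<equiv> \<lambda>i. real (a i) / w $ i - real b / last_coord w"
  shows "part i (part j (full_monomial a b)) w = full_monomial a b w *
     (F i * F j - (if i = j then real (a i) / (w $ i)^2 else 0) - real b / (last_coord w)^2)"
proof -
  define a' where "a' = a(j := a j - 1)"
  define z where "z = last_coord w"
  have "part i (part j (full_monomial a b)) w
      = real (a j) * part i (full_monomial a' b) w - real b * part i (full_monomial a (b - 1)) w"
    unfolding part_full_monomial a'_def part_def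
    by (rule DERIV_imp_deriv) (intro DERIV_diff DERIV_cmult full_monomial_axis_deriv)
  also have "\<dots> = (real (a j) * full_monomial a' b w) * (real (a' i) / w $ i - real b / z)
                  - (real b * full_monomial a (b - 1) w) * (real (a i) / w $ i - real (b - 1) / z)"
    unfolding part_full_monomial_generic[OF w z] z_def by simp
  also have "\<dots> = full_monomial a b w * (real (a j) / w $ j * (real (a' i) / w $ i - real b / z)
                  - real b / z * (real (a i) / w $ i - real (b - 1) / z))"
    unfolding a'_def full_monomial_lower_coord[OF w] full_monomial_lower_last[OF z] z_def[symmetric]
    by (simp add: algebra_simps)
  also have "\<dots> = full_monomial a b w * (F i * F j - (if i = j then real (a i) / (w $ i)^2 else 0) - real b / z^2)"
  proof -
    \<comment> \<open>truncated subtraction is harmless here: both products vanish when the exponent is 0\<close>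
    have exps: "real (a j) * real (a' i)
        = real (a i) * real (a j) - (if i = j then real (a i) / (w $ i)^2 else 0) * w $ i * w $ j"
      using w[of i] by (cases "a j") (auto simp: a'_def field_simps power2_eq_square)
    have last_exp: "real b * real (b - 1) = real b * real b - real b"
      by (cases b) (auto simp: algebra_simps)
    show ?thesis unfolding F_def z_def[symmetric]
      by (simp only: second_log_derivative_identity[OF w w z[folded z_def] exps last_exp])
  qed
  finally show ?thesis unfolding z_def .
qed

section \<open>Polynomial test functions\<close>

inductive_set poly_fun :: "(real ^ 'n::{finite,linorder} \<Rightarrow> real) set" where
  monomial: "monomial m \<in> poly_fun"
| cmult: "f \<in> poly_fun \<Longrightarrow> (\<lambda>w. c * f w) \<in> poly_fun"
| add: "f \<in> poly_fun \<Longrightarrow> g \<in> poly_fun \<Longrightarrow> (\<lambda>w. f w + g w) \<in> poly_fun"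

lemma monomial_eq_full_monomial: "monomial m = full_monomial m 0"
  unfolding full_monomial_def by (rule ext) simp

lemma poly_fun_axis_deriv:
  assumes "f \<in> poly_fun"
  shows "((\<lambda>h. f (w + h *\<^sub>R axis i 1)) has_real_derivative part i f w) (at 0) \<and> part i f \<in> poly_fun"
  using assms
proof (induction arbitrary: w i)
  case (monomial m)
  have deriv: "((\<lambda>h. monomial m (w + h *\<^sub>R axis i 1)) has_real_derivative
      real (m i) * monomial (m(i := m i - 1)) w) (at 0)" for w i
    using full_monomial_axis_deriv[of m 0 w i] unfolding monomial_eq_full_monomial by simp
  then have "part i (monomial m) = (\<lambda>w. real (m i) * monomial (m(i := m i - 1)) w)" for i
    unfolding part_def by (intro ext DERIV_imp_deriv)
  then show ?case using deriv by (auto intro: poly_fun.intros)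
next
  case (cmult f c)
  have deriv: "((\<lambda>h. c * f (w + h *\<^sub>R axis i 1)) has_real_derivative c * part i f w) (at 0)" for w i
    using cmult.IH by (intro DERIV_cmult) blast
  then have "part i (\<lambda>w. c * f w) = (\<lambda>w. c * part i f w)" for i
    unfolding part_def by (intro ext DERIV_imp_deriv)
  then show ?case using deriv cmult.IH by (auto intro: poly_fun.intros)
next
  case (add f g)
  have deriv: "((\<lambda>h. f (w + h *\<^sub>R axis i 1) + g (w + h *\<^sub>R axis i 1)) has_real_derivative
      part i f w + part i g w) (at 0)" for w i
    using add.IH by (intro DERIV_add) blast+
  then have "part i (\<lambda>w. f w + g w) = (\<lambda>w. part i f w + part i g w)" for i
    unfolding part_def by (intro ext DERIV_imp_deriv)
  then show ?case using deriv add.IH by (auto intro: poly_fun.intros)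
qed

lemma poly_fun_part: "f \<in> poly_fun \<Longrightarrow> part i f \<in> poly_fun"
  using poly_fun_axis_deriv by blast

lemma part_cmult: "f \<in> poly_fun \<Longrightarrow> part i (\<lambda>w. c * f w) = (\<lambda>w. c * part i f w)"
  unfolding part_def
  by (intro ext DERIV_imp_deriv DERIV_cmult) (use poly_fun_axis_deriv[of f] in \<open>auto simp: part_def\<close>)

lemma part_add:
  "f \<in> poly_fun \<Longrightarrow> g \<in> poly_fun \<Longrightarrow> part i (\<lambda>w. f w + g w) = (\<lambda>w. part i f w + part i g w)"
  unfolding part_def
  by (intro ext DERIV_imp_deriv DERIV_add) (use poly_fun_axis_deriv[of f] poly_fun_axis_deriv[of g] in \<open>auto simp: part_def\<close>)

lemma poly_fun_mult_monomial: "g \<in> poly_fun \<Longrightarrow> (\<lambda>w. monomial m w * g w) \<in> poly_fun"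
proof (induction rule: poly_fun.induct)
  case (monomial m')
  have "(\<lambda>w. monomial m w * monomial m' w) = monomial (\<lambda>i. m i + m' i)"
    unfolding monomial_def by (rule ext) (simp add: power_add prod.distrib)
  then show ?case by (simp add: poly_fun.monomial)
next
  case (cmult f c)
  then show ?case using poly_fun.cmult[OF cmult.IH, of c] by (simp add: mult.left_commute)
next
  case (add f g)
  then show ?case using poly_fun.add[OF add.IH] by (simp add: distrib_left)
qed

lemma poly_fun_mult: "f \<in> poly_fun \<Longrightarrow> g \<in> poly_fun \<Longrightarrow> (\<lambda>w. f w * g w) \<in> poly_fun"
proof (induction rule: poly_fun.induct)
  case (monomial m)
  then show ?case by (rule poly_fun_mult_monomial)
next
  case (cmult f c)
  then show ?case using poly_fun.cmult[OF cmult.IH, of c] by (simp add: mult.assoc)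
next
  case (add f1 f2)
  then show ?case using poly_fun.add[OF add.IH] by (simp add: distrib_right)
qed

lemma poly_fun_const: "(\<lambda>w. c) \<in> poly_fun"
proof -
  have "(\<lambda>w::real ^ 'n::{finite,linorder}. c * monomial (\<lambda>_. 0) w) \<in> poly_fun"
    by (intro poly_fun.intros)
  then show ?thesis unfolding monomial_def by simp
qed

lemma poly_fun_coord: "(\<lambda>w. w $ i) \<in> poly_fun"
proof -
  have "monomial (\<lambda>j. if j = i then 1 else 0) = (\<lambda>w. w $ i)"
    unfolding monomial_def by (rule ext) (simp add: if_distrib[of "\<lambda>e. _ ^ e"] cong: if_cong)
  then show ?thesis using poly_fun.monomial by metis
qed

lemma poly_fun_diff: "f \<in> poly_fun \<Longrightarrow> g \<in> poly_fun \<Longrightarrow> (\<lambda>w. f w - g w) \<in> poly_fun"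
  using poly_fun.add[of f "\<lambda>w. (-1) * g w"] poly_fun.cmult[of g "-1"] by simp

lemma poly_fun_sum: "(\<And>x. x \<in> S \<Longrightarrow> F x \<in> poly_fun) \<Longrightarrow> (\<lambda>w. \<Sum>x\<in>S. F x w) \<in> poly_fun"
proof (induction S rule: infinite_finite_induct)
  case (insert x S)
  then show ?case by (simp add: poly_fun.add)
qed (simp_all add: poly_fun_const)

lemma poly_fun_power: "f \<in> poly_fun \<Longrightarrow> (\<lambda>w. f w ^ k) \<in> poly_fun"
  by (induction k) (simp_all add: poly_fun_const poly_fun_mult)

lemmas poly_fun_intros =
  poly_fun.monomial poly_fun.cmult poly_fun.add poly_fun_const poly_fun_coord poly_fun_diff
  poly_fun_sum poly_fun_power poly_fun_mult poly_fun_part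

lemma poly_fun_full_monomial: "full_monomial a b \<in> poly_fun"
  unfolding full_monomial_def last_coord_def by (intro poly_fun_intros)

lemma poly_fun_wf_gen: "f \<in> poly_fun \<Longrightarrow> wf_gen \<theta> f \<in> poly_fun"
  unfolding wf_gen_def Let_def split_def by (intro poly_fun_intros)

lemma poly_fun_continuous: "f \<in> poly_fun \<Longrightarrow> continuous_on S f"
proof (induction rule: poly_fun.induct)
  case (monomial m)
  show ?case unfolding monomial_def by (intro continuous_intros)
qed (simp_all add: continuous_on_mult_left continuous_on_add)

lemma wf_gen_cmult:
  assumes f: "f \<in> poly_fun"
  shows "wf_gen \<theta> (\<lambda>w. c * f w) x = c * wf_gen \<theta> f x"
proof -
  have "part i (part j (\<lambda>w. c * f w)) = (\<lambda>w. c * part i (part j f) w)" for i j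
    unfolding part_cmult[OF f] by (rule part_cmult[OF poly_fun_part[OF f]])
  then show ?thesis
    unfolding wf_gen_def Let_def part_cmult[OF f]
    by (simp add: sum_distrib_left split_def algebra_simps)
qed

lemma wf_gen_add:
  assumes f: "f \<in> poly_fun" and g: "g \<in> poly_fun"
  shows "wf_gen \<theta> (\<lambda>w. f w + g w) x = wf_gen \<theta> f x + wf_gen \<theta> g x"
proof -
  have "part i (part j (\<lambda>w. f w + g w)) = (\<lambda>w. part i (part j f) w + part i (part j g) w)" for i j
    unfolding part_add[OF f g] by (rule part_add[OF poly_fun_part[OF f] poly_fun_part[OF g]])
  then show ?thesis
    unfolding wf_gen_def Let_def part_add[OF f g]
    by (simp only: distrib_left sum.distrib split_def)
qed

lemma wf_simplex_coord_bounds: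
  assumes "w \<in> wf_simplex"
  shows "0 \<le> w $ i" "w $ i \<le> 1"
proof -
  have nonneg: "\<forall>j. 0 \<le> w $ j" and total: "(\<Sum>j\<in>UNIV. w $ j) \<le> 1"
    using assms by (auto simp: wf_simplex_def)
  have "w $ i \<le> (\<Sum>j\<in>UNIV. w $ j)" by (rule member_le_sum) (use nonneg in auto)
  with nonneg total show "0 \<le> w $ i" "w $ i \<le> 1" by auto
qed

lemma poly_fun_bounded_on_wf_simplex: "f \<in> poly_fun \<Longrightarrow> \<exists>B. \<forall>w\<in>wf_simplex. \<bar>f w\<bar> \<le> B"
proof (induction rule: poly_fun.induct)
  case (monomial m)
  have "\<bar>monomial m w\<bar> \<le> 1" if "w \<in> wf_simplex" for w
    unfolding monomial_def abs_prod power_abs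
    using wf_simplex_coord_bounds[OF that] by (intro prod_le_1) (auto intro: power_le_one)
  then show ?case by blast
next
  case (cmult f c)
  then obtain B where "\<forall>w\<in>wf_simplex. \<bar>f w\<bar> \<le> B" by blast
  then have "\<forall>w\<in>wf_simplex. \<bar>c * f w\<bar> \<le> \<bar>c\<bar> * B" by (simp add: abs_mult mult_left_mono)
  then show ?case by blast
next
  case (add f g)
  then obtain B1 B2 where "\<forall>w\<in>wf_simplex. \<bar>f w\<bar> \<le> B1" "\<forall>w\<in>wf_simplex. \<bar>g w\<bar> \<le> B2" by blast
  then have "\<forall>w\<in>wf_simplex. \<bar>f w + g w\<bar> \<le> B1 + B2" by (metis abs_triangle_ineq add_mono order_trans)
  then show ?case by blast
qed

lemma poly_fun_integrable:
  assumes "finite_measure M" "sets M = sets borel" "AE y in M. y \<in> wf_simplex" "f \<in> poly_fun"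
  shows "integrable M f"
proof -
  interpret finite_measure M by fact
  obtain B where B: "\<forall>w\<in>wf_simplex. \<bar>f w\<bar> \<le> B"
    using poly_fun_bounded_on_wf_simplex[OF assms(4)] by blast
  have "AE y in M. norm (f y) \<le> B" using assms(3) by eventually_elim (use B in auto)
  moreover have "f \<in> borel_measurable M"
    using borel_measurable_continuous_onI[OF poly_fun_continuous[OF assms(4)]]
    by (simp add: measurable_cong_sets[OF assms(2) refl])
  ultimately show ?thesis by (rule integrable_const_bound)
qed

lemma WF_diffusion_integrable:
  assumes "is_WF_diffusion \<theta> P" "x \<in> wf_simplex" "s \<ge> 0" "f \<in> poly_fun"
  shows "integrable (P s x) f"
proof -
  have "prob_space (P s x)" "sets (P s x) = sets borel" "AE y in P s x. y \<in> wf_simplex"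
    using assms(1-3) unfolding is_WF_diffusion_def by blast+
  then show ?thesis using poly_fun_integrable[OF prob_space.finite_measure _ _ assms(4)] by blast
qed

lemma WF_diffusion_poly_deriv:
  assumes WF: "is_WF_diffusion \<theta> P" and x: "x \<in> wf_simplex" and t: "t \<ge> 0" and f: "f \<in> poly_fun"
  shows "((\<lambda>s. \<integral>y. f y \<partial>P s x) has_real_derivative (\<integral>y. wf_gen \<theta> f y \<partial>P t x)) (at t within {0..})"
  using f
proof induction
  case (monomial m)
  then show ?case using WF x t unfolding is_WF_diffusion_def by blast
next
  case (cmult f c)
  have "((\<lambda>s. c * (\<integral>y. f y \<partial>P s x)) has_real_derivative c * (\<integral>y. wf_gen \<theta> f y \<partial>P t x)) (at t within {0..})"
    by (intro DERIV_cmult cmult.IH)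
  then show ?case by (simp add: wf_gen_cmult[OF cmult.hyps])
next
  case (add f g)
  note integrable = WF_diffusion_integrable[OF WF x]
  have "((\<lambda>s. (\<integral>y. f y \<partial>P s x) + (\<integral>y. g y \<partial>P s x)) has_real_derivative
       (\<integral>y. wf_gen \<theta> f y \<partial>P t x) + (\<integral>y. wf_gen \<theta> g y \<partial>P t x)) (at t within {0..})"
    by (intro DERIV_add add.IH)
  moreover have "(\<integral>y. wf_gen \<theta> f y \<partial>P t x) + (\<integral>y. wf_gen \<theta> g y \<partial>P t x)
      = (\<integral>y. wf_gen \<theta> (\<lambda>w. f w + g w) y \<partial>P t x)"
    unfolding wf_gen_add[OF add.hyps]
    by (rule Bochner_Integration.integral_add[symmetric]) (intro integrable t poly_fun_wf_gen add.hyps)+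
  moreover have "(\<integral>y. f y \<partial>P s x) + (\<integral>y. g y \<partial>P s x) = (\<integral>y. f y + g y \<partial>P s x)" if "s \<in> {0..}" for s
    using that by (intro Bochner_Integration.integral_add[symmetric] integrable add.hyps) auto
  ultimately show ?case
    using has_field_derivative_transform_within[OF _ zero_less_one, of _ _ t "{0..}"] t by simp
qed

section \<open>An identity between rational functions\<close>

lemma sum_less_pairs_add_swap:
  fixes f :: "'n::{finite,linorder} \<Rightarrow> 'n \<Rightarrow> 'a::ab_group_add"
  shows "(\<Sum>(i,j)\<in>{(i,j). i < j}. f i j + f j i) = (\<Sum>i\<in>UNIV. \<Sum>j\<in>UNIV. f i j) - (\<Sum>i\<in>UNIV. f i i)"
proof -
  let ?L = "{(i::'n,j). i < j}" and ?G = "{(i::'n,j). j < i}" and ?D = "{(i::'n,j). i = j}"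
  have "(\<Sum>i\<in>UNIV. \<Sum>j\<in>UNIV. f i j) = (\<Sum>p\<in>?L \<union> ?G \<union> ?D. f (fst p) (snd p))"
    by (simp add: sum.cartesian_product UNIV_Times_UNIV[symmetric] split_def del: UNIV_Times_UNIV)
      (rule sum.cong, auto)
  also have "\<dots> = (\<Sum>p\<in>?L. f (fst p) (snd p)) + (\<Sum>p\<in>?G. f (fst p) (snd p)) + (\<Sum>p\<in>?D. f (fst p) (snd p))"
    by (subst sum.union_disjoint, simp, simp, force)+ simp
  also have "(\<Sum>p\<in>?G. f (fst p) (snd p)) = (\<Sum>p\<in>?L. f (snd p) (fst p))"
  proof -
    have "?G = prod.swap ` ?L" by auto
    then show ?thesis by (simp add: sum.reindex inj_on_def)
  qed
  also have "(\<Sum>p\<in>?D. f (fst p) (snd p)) = (\<Sum>i\<in>UNIV. f i i)"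
  proof -
    have "?D = (\<lambda>i. (i, i)) ` UNIV" by auto
    then show ?thesis by (simp add: sum.reindex inj_on_def)
  qed
  finally show ?thesis by (simp add: sum.distrib split_def)
qed

lemma sum_less_pairs_symmetric:
  fixes f :: "'n::{finite,linorder} \<Rightarrow> 'n \<Rightarrow> real"
  assumes "\<And>i j. f i j = f j i"
  shows "(\<Sum>(i,j)\<in>{(i,j). i < j}. f i j) = 1/2 * ((\<Sum>i\<in>UNIV. \<Sum>j\<in>UNIV. f i j) - (\<Sum>i\<in>UNIV. f i i))"
proof -
  have "(\<Sum>(i,j)\<in>{(i,j). i < j}. f i j + f j i) = 2 * (\<Sum>(i,j)\<in>{(i,j). i < j}. f i j)"
    using assms by (simp add: sum_distrib_left split_def)
  then show ?thesis using sum_less_pairs_add_swap[of f] by simp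
qed

text \<open>For a = l, b = N - |l| and z = x_d, the functions F and E below are the first and second
  logarithmic derivatives of x^a z^b, and X, Y, Z are the Moran jump rates times
  D(neighbouring state) / D(current state) - 1.\<close>

lemma wf_log_drift_closed_form:
  fixes a w :: "'n::finite \<Rightarrow> real" and b z A W S2 :: real
  assumes w: "\<And>i. w i \<noteq> 0" and z: "z \<noteq> 0"
    and A: "A = (\<Sum>i\<in>UNIV. a i)" and W: "W = (\<Sum>i\<in>UNIV. w i)" and S2: "S2 = (\<Sum>i\<in>UNIV. a i / w i)"
  shows "(\<Sum>i\<in>UNIV. (1 - real (CARD('n) + 1) * w i) * (a i / w i - b / z))
      = S2 - real CARD('n) * b/z - real (CARD('n) + 1) * (A - b*W/z)"
proof -
  have "(\<Sum>i\<in>UNIV. (1 - real (CARD('n) + 1) * w i) * (a i / w i - b / z))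
      = (\<Sum>i\<in>UNIV. a i / w i - b / z - real (CARD('n) + 1) * a i + (real (CARD('n) + 1) * b / z) * w i)"
    by (rule sum.cong) (auto simp: field_simps w z)
  also have "\<dots> = S2 - real CARD('n) * (b / z) - real (CARD('n) + 1) * A + (real (CARD('n) + 1) * b / z) * W"
    by (simp only: sum_subtractf sum.distrib sum_distrib_left[symmetric] sum_constant
        A[symmetric] W[symmetric] S2[symmetric])
  finally show ?thesis by (simp add: algebra_simps)
qed

lemma wf_log_generator_closed_form:
  fixes a w :: "'n::{finite,linorder} \<Rightarrow> real" and b z \<theta> A W S1 S2 :: real
  assumes w: "\<And>i. w i \<noteq> 0" and z: "z \<noteq> 0"
    and A: "A = (\<Sum>i\<in>UNIV. a i)" and W: "W = (\<Sum>i\<in>UNIV. w i)"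
    and S1: "S1 = (\<Sum>i\<in>UNIV. a i ^ 2 / w i)" and S2: "S2 = (\<Sum>i\<in>UNIV. a i / w i)"
  defines "F \<equiv> \<lambda>i. a i / w i - b / z"
  defines "E \<equiv> \<lambda>i j. F i * F j - (if i = j then a i / (w i)^2 else 0) - b / z^2"
  shows "(\<Sum>i\<in>UNIV. 1/2 * w i * (1 - w i) * E i i) - (\<Sum>(i,j)\<in>{(i,j). i < j}. w i * w j * E i j)
          + \<theta> / (real (CARD('n) + 1) - 1) * (\<Sum>i\<in>UNIV. (1 - real (CARD('n) + 1) * w i) * F i)
       = 1/2 * (S1 - 2*A*b/z + b^2*W/z^2 - S2 - b*W/z^2) - 1/2 * ((A - b*W/z)^2 - A - b*W^2/z^2)
          + \<theta> / real CARD('n) * (S2 - real CARD('n) * b/z - real (CARD('n) + 1) * (A - b*W/z))"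
proof -
  note sums = sum_subtractf sum.distrib sum_distrib_left[symmetric] sum_distrib_right[symmetric]
    sum_constant A[symmetric] W[symmetric] S1[symmetric] S2[symmetric]
  have wF: "(\<Sum>i\<in>UNIV. w i * F i) = A - b * W / z"
  proof -
    have "(\<Sum>i\<in>UNIV. w i * F i) = (\<Sum>i\<in>UNIV. a i - (b / z) * w i)"
      by (rule sum.cong) (auto simp: F_def field_simps w z)
    then show ?thesis by (simp only: sums) simp
  qed
  have diag: "(\<Sum>i\<in>UNIV. w i * E i i) = S1 - 2*A*b/z + b^2*W/z^2 - S2 - b*W/z^2"
  proof -
    have "(\<Sum>i\<in>UNIV. w i * E i i)
        = (\<Sum>i\<in>UNIV. a i ^ 2 / w i - (2*b/z) * a i + (b^2/z^2 - b/z^2) * w i - a i / w i)"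
      by (rule sum.cong) (auto simp: E_def F_def field_simps w z power2_eq_square)
    also have "\<dots> = S1 - (2*b/z) * A + (b^2/z^2 - b/z^2) * W - S2"
      by (simp only: sums; (simp add: algebra_simps)?)
    finally show ?thesis by (simp add: field_simps)
  qed
  have full: "(\<Sum>i\<in>UNIV. \<Sum>j\<in>UNIV. w i * w j * E i j) = (A - b*W/z)^2 - A - b*W^2/z^2"
  proof -
    have "(\<Sum>i\<in>UNIV. \<Sum>j\<in>UNIV. w i * w j * E i j)
       = (\<Sum>i\<in>UNIV. \<Sum>j\<in>UNIV. (w i * F i) * (w j * F j) - (if i = j then a i else 0) - (b/z^2) * (w i * w j))"
      by (intro sum.cong) (auto simp: E_def field_simps w z power2_eq_square)
    also have "\<dots> = (\<Sum>i\<in>UNIV. w i * F i) * (\<Sum>j\<in>UNIV. w j * F j) - A - (b/z^2) * (W * W)"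
      by (simp only: sum_subtractf sum_product[symmetric] sum.delta A[symmetric] W[symmetric]
          sum_distrib_left[symmetric] sum_distrib_right[symmetric]) (simp add: A)
    finally show ?thesis unfolding wF by (simp add: power2_eq_square)
  qed
  have "E i j = E j i" for i j unfolding E_def by (auto simp: algebra_simps)
  then have pairs: "(\<Sum>(i,j)\<in>{(i,j). i < j}. w i * w j * E i j)
      = 1/2 * ((\<Sum>i\<in>UNIV. \<Sum>j\<in>UNIV. w i * w j * E i j) - (\<Sum>i\<in>UNIV. w i * w i * E i i))"
    by (intro sum_less_pairs_symmetric) (simp add: mult.commute)
  have drift: "(\<Sum>i\<in>UNIV. (1 - real (CARD('n) + 1) * w i) * F i)
      = S2 - real CARD('n) * b/z - real (CARD('n) + 1) * (A - b*W/z)"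
    unfolding F_def by (rule wf_log_drift_closed_form[OF w z A W S2])
  have "(\<Sum>i\<in>UNIV. 1/2 * w i * (1 - w i) * E i i)
      = 1/2 * (\<Sum>i\<in>UNIV. w i * E i i) - 1/2 * (\<Sum>i\<in>UNIV. w i * w i * E i i)"
    by (simp add: sum_distrib_left sum_subtractf[symmetric] algebra_simps diff_divide_distrib)
  then show ?thesis unfolding pairs drift diag full by (simp add: algebra_simps)
qed

lemma moran_log_generator_closed_form:
  fixes a w :: "'n::{finite,linorder} \<Rightarrow> real" and b z c A W S1 S2 :: real
  assumes w: "\<And>i. w i \<noteq> 0" and z: "z \<noteq> 0"
    and A: "A = (\<Sum>i\<in>UNIV. a i)" and W: "W = (\<Sum>i\<in>UNIV. w i)"
    and S1: "S1 = (\<Sum>i\<in>UNIV. a i ^ 2 / w i)" and S2: "S2 = (\<Sum>i\<in>UNIV. a i / w i)"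
  defines "X \<equiv> \<lambda>i j. a i * (c + a i - 1) * w j / w i - a i * (a j + c)"
  defines "Y \<equiv> \<lambda>i. b * (c + b - 1) * w i / z - b * (a i + c)"
  defines "Z \<equiv> \<lambda>i. a i * (c + a i - 1) * z / w i - a i * (b + c)"
  shows "1/2 * (\<Sum>(i,j)\<in>{(i,j). i < j}. X i j + X j i) + 1/2 * (\<Sum>i\<in>UNIV. Y i + Z i)
       = 1/2 * ((S1 + (c - 1) * S2) * W - A^2 - c * real CARD('n) * A + A)
          + 1/2 * (b * (c + b - 1) * W / z - b * A - b * real CARD('n) * c
                   + (S1 + (c - 1) * S2) * z - A * (b + c))"
proof -
  note sums = sum_subtractf sum.distrib sum_distrib_left[symmetric] sum_distrib_right[symmetric]
    sum_constant A[symmetric] W[symmetric] S1[symmetric] S2[symmetric]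
  have "(\<Sum>i\<in>UNIV. \<Sum>j\<in>UNIV. X i j)
      = (\<Sum>i\<in>UNIV. \<Sum>j\<in>UNIV. (a i ^ 2 / w i + (c - 1) * (a i / w i)) * w j - a i * a j - c * a i)"
    by (intro sum.cong) (auto simp: X_def field_simps w power2_eq_square)
  also have "\<dots> = (\<Sum>i\<in>UNIV. (a i ^ 2 / w i + (c - 1) * (a i / w i)) * W - a i * A - real CARD('n) * (c * a i))"
    by (simp only: sums; (simp add: algebra_simps)?)
  also have "\<dots> = (S1 + (c - 1) * S2) * W - A * A - real CARD('n) * (c * A)"
    by (simp only: sums; (simp add: algebra_simps)?)
  moreover have "(\<Sum>i\<in>UNIV. X i i) = - A"
    by (simp add: X_def field_simps w A sum_negf)
  ultimately have pairs: "(\<Sum>(i,j)\<in>{(i,j). i < j}. X i j + X j i)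
      = (S1 + (c - 1) * S2) * W - A^2 - c * real CARD('n) * A + A"
    unfolding sum_less_pairs_add_swap by (simp add: power2_eq_square algebra_simps)
  have "(\<Sum>i\<in>UNIV. Y i + Z i) = (\<Sum>i\<in>UNIV. (b * (c + b - 1) / z) * w i - b * a i - b * c
         + (a i ^ 2 / w i + (c - 1) * (a i / w i)) * z - (b + c) * a i)"
    by (rule sum.cong) (auto simp: Y_def Z_def field_simps w z power2_eq_square)
  also have "\<dots> = (b * (c + b - 1) / z) * W - b * A - real CARD('n) * (b * c)
      + (S1 + (c - 1) * S2) * z - (b + c) * A"
    by (simp only: sums; (simp add: algebra_simps)?)
  finally show ?thesis unfolding pairs by (simp add: field_simps z)
qed

lemma log_generators_agree:
  fixes a w :: "'n::{finite,linorder} \<Rightarrow> real" and b z \<theta> :: real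
  assumes w: "\<And>i. w i \<noteq> 0" and z: "z \<noteq> 0" and z_def: "z = 1 - (\<Sum>i\<in>UNIV. w i)"
  defines "c \<equiv> 2 * \<theta> / real CARD('n)"
  defines "F \<equiv> \<lambda>i. a i / w i - b / z"
  defines "E \<equiv> \<lambda>i j. F i * F j - (if i = j then a i / (w i)^2 else 0) - b / z^2"
  defines "X \<equiv> \<lambda>i j. a i * (c + a i - 1) * w j / w i - a i * (a j + c)"
  defines "Y \<equiv> \<lambda>i. b * (c + b - 1) * w i / z - b * (a i + c)"
  defines "Z \<equiv> \<lambda>i. a i * (c + a i - 1) * z / w i - a i * (b + c)"
  shows "(\<Sum>i\<in>UNIV. 1/2 * w i * (1 - w i) * E i i) - (\<Sum>(i,j)\<in>{(i,j). i < j}. w i * w j * E i j)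
          + \<theta> / (real (CARD('n) + 1) - 1) * (\<Sum>i\<in>UNIV. (1 - real (CARD('n) + 1) * w i) * F i)
       = 1/2 * (\<Sum>(i,j)\<in>{(i,j). i < j}. X i j + X j i) + 1/2 * (\<Sum>i\<in>UNIV. Y i + Z i)"
proof -
  define A where "A = (\<Sum>i\<in>UNIV. a i)"
  define W where "W = (\<Sum>i\<in>UNIV. w i)"
  define S1 where "S1 = (\<Sum>i\<in>UNIV. a i ^ 2 / w i)"
  define S2 where "S2 = (\<Sum>i\<in>UNIV. a i / w i)"
  have W: "W = 1 - z" using z_def W_def by simp
  show ?thesis
    unfolding F_def E_def X_def Y_def Z_def
    unfolding wf_log_generator_closed_form[OF w z A_def W_def S1_def S2_def]
      moran_log_generator_closed_form[OF w z A_def W_def S1_def S2_def] W c_def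
    by (simp add: field_simps power2_eq_square z)
qed

section \<open>Generator duality\<close>

definition gamma_weight :: "real \<Rightarrow> real \<Rightarrow> nat \<Rightarrow> real" where
  "gamma_weight c x e = x ^ e / Gamma (c + real e)"

lemma gamma_weight_Suc:
  assumes "c > 0"
  shows "gamma_weight c x (Suc e) = gamma_weight c x e * x / (c + real e)"
proof -
  have "c + real e \<notin> \<int>\<^sub>\<le>\<^sub>0" using assms nonpos_Ints_nonpos[of "c + real e"] by auto
  then have "Gamma (c + real (Suc e)) = (c + real e) * Gamma (c + real e)"
    using Gamma_plus1[of "c + real e"] by (simp add: ac_simps)
  then show ?thesis unfolding gamma_weight_def by (simp add: field_simps)
qed

lemma gamma_weight_pred:
  assumes "c > 0" "e \<ge> 1" "x \<noteq> 0"
  shows "gamma_weight c x (e - 1) = gamma_weight c x e * (c + real e - 1) / x"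
proof -
  obtain f where f: "e = Suc f" using assms(2) by (cases e) auto
  have "c + real f > 0" using assms(1) by simp
  then show ?thesis using gamma_weight_Suc[OF assms(1), of x f] assms(3) unfolding f by (simp add: field_simps)
qed

lemma gamma_weight_nonzero: "c > 0 \<Longrightarrow> x \<noteq> 0 \<Longrightarrow> gamma_weight c x e \<noteq> 0"
  unfolding gamma_weight_def by (simp add: add_pos_nonneg less_imp_neq[symmetric])

lemma dual_fun_eq_gamma_weights:
  "dual_fun N \<theta> w m = (\<Prod>i\<in>UNIV. gamma_weight (2 * \<theta> / real CARD('n)) (w $ i) (m i))
      * gamma_weight (2 * \<theta> / real CARD('n)) (last_coord w) (N - sum m UNIV)"
  for w :: "real ^ 'n::{finite,linorder}"
  unfolding dual_fun_def gamma_weight_def last_coord_def Let_def by simp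

lemma dual_fun_eq_scaled_full_monomial:
  fixes l :: "'n::{finite,linorder} \<Rightarrow> nat"
  shows "\<exists>C. (\<lambda>y. dual_fun N \<theta> y l) = (\<lambda>y. C * full_monomial l (N - sum l UNIV) y)"
proof (intro exI ext)
  fix y :: "real ^ 'n::{finite,linorder}"
  let ?c = "2 * \<theta> / real CARD('n)"
  show "dual_fun N \<theta> y l = inverse ((\<Prod>i\<in>UNIV. Gamma (?c + real (l i))) * Gamma (?c + real (N - sum l UNIV)))
      * full_monomial l (N - sum l UNIV) y"
    unfolding dual_fun_def full_monomial_def monomial_def last_coord_def Let_def
    by (simp add: prod_dividef field_simps)
qed

lemma poly_fun_dual_fun: "(\<lambda>y. dual_fun N \<theta> y l) \<in> poly_fun"
proof -
  obtain C where "(\<lambda>y. dual_fun N \<theta> y l) = (\<lambda>y. C * full_monomial l (N - sum l UNIV) y)"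
    using dual_fun_eq_scaled_full_monomial by blast
  then show ?thesis by (simp add: poly_fun.cmult poly_fun_full_monomial)
qed

lemma prod_fun_upd:
  fixes f :: "'n::finite \<Rightarrow> nat \<Rightarrow> 'a::comm_monoid_mult"
  shows "(\<Prod>k\<in>UNIV. f k ((l(i := x)) k)) * f i (l i) = (\<Prod>k\<in>UNIV. f k (l k)) * f i x"
proof -
  have "(\<Prod>k\<in>UNIV-{i}. f k ((l(i := x)) k)) = (\<Prod>k\<in>UNIV-{i}. f k (l k))"
    by (rule prod.cong) auto
  then show ?thesis by (simp add: prod.remove[of UNIV i] mult_ac)
qed

lemma sum_fun_upd:
  fixes l :: "'n::finite \<Rightarrow> nat"
  shows "sum (l(i := x)) UNIV + l i = sum l UNIV + x"
proof -
  have "(\<Sum>k\<in>UNIV-{i}. (l(i := x)) k) = (\<Sum>k\<in>UNIV-{i}. l k)"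
    by (rule sum.cong) auto
  then show ?thesis by (simp add: sum.remove[of UNIV i])
qed

locale generic_point =
  fixes N :: nat and \<theta> c :: real and w :: "real ^ 'n::{finite,linorder}"
  assumes theta_pos: "\<theta> > 0" and c_eq: "c = 2 * \<theta> / real CARD('n)"
    and coord_nonzero: "\<And>i. w $ i \<noteq> 0" and last_coord_nonzero: "last_coord w \<noteq> 0"
begin

definition coord_weight :: "('n \<Rightarrow> nat) \<Rightarrow> real" where
  "coord_weight m = (\<Prod>k\<in>UNIV. gamma_weight c (w $ k) (m k))"

lemma c_pos: "c > 0"
  unfolding c_eq using theta_pos by simp

lemma dual_fun_split: "dual_fun N \<theta> w m = coord_weight m * gamma_weight c (last_coord w) (N - sum m UNIV)"
  unfolding coord_weight_def dual_fun_eq_gamma_weights by (simp add: c_eq)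

lemma coord_weight_upd:
  "coord_weight (m(i := e)) = coord_weight m * gamma_weight c (w $ i) e / gamma_weight c (w $ i) (m i)"
  using prod_fun_upd[of "\<lambda>k e. gamma_weight c (w $ k) e" m i e]
    gamma_weight_nonzero[OF c_pos coord_nonzero, of i "m i"]
  unfolding coord_weight_def by (simp add: field_simps)

lemma coord_weight_inc: "coord_weight (m(i := m i + 1)) = coord_weight m * w $ i / (c + real (m i))"
  unfolding coord_weight_upd using gamma_weight_Suc[OF c_pos, of "w $ i" "m i"]
    gamma_weight_nonzero[OF c_pos coord_nonzero, of i "m i"] by simp

lemma coord_weight_dec:
  "m i \<ge> 1 \<Longrightarrow> coord_weight (m(i := m i - 1)) = coord_weight m * (c + real (m i) - 1) / w $ i"
  unfolding coord_weight_upd using gamma_weight_pred[OF c_pos _ coord_nonzero, of "m i" i]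
    gamma_weight_nonzero[OF c_pos coord_nonzero, of i "m i"] by simp

lemma dual_fun_move:
  assumes "i \<noteq> j" "l i \<ge> 1"
  shows "dual_fun N \<theta> w (l(i := l i - 1, j := l j + 1))
    = dual_fun N \<theta> w l * ((c + real (l i) - 1) * w $ j / w $ i / (c + real (l j)))"
proof -
  define l' where "l' = l(i := l i - 1)"
  have moved: "l(i := l i - 1, j := l j + 1) = l'(j := l' j + 1)" and l'j: "l' j = l j"
    using assms(1) by (auto simp: l'_def fun_eq_iff)
  have "sum (l'(j := l' j + 1)) UNIV = sum l UNIV"
    using sum_fun_upd[of l i "l i - 1"] sum_fun_upd[of l' j "l' j + 1"] assms(2) unfolding l'_def by simp
  then have "dual_fun N \<theta> w (l(i := l i - 1, j := l j + 1))
      = coord_weight (l'(j := l' j + 1)) * gamma_weight c (last_coord w) (N - sum l UNIV)"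
    unfolding dual_fun_split moved by simp
  also have "\<dots> = coord_weight l * ((c + real (l i) - 1) * w $ j / w $ i / (c + real (l j)))
      * gamma_weight c (last_coord w) (N - sum l UNIV)"
  proof -
    have "coord_weight l' = coord_weight l * (c + real (l i) - 1) / w $ i"
      unfolding l'_def by (rule coord_weight_dec[of l i, OF assms(2)])
    moreover have "coord_weight (l'(j := l' j + 1)) = coord_weight l' * w $ j / (c + real (l' j))"
      by (rule coord_weight_inc)
    ultimately show ?thesis unfolding l'j by simp
  qed
  finally show ?thesis unfolding dual_fun_split by (simp only: ac_simps)
qed

lemma dual_fun_up:
  assumes "sum l UNIV < N"
  shows "dual_fun N \<theta> w (l(i := l i + 1))
    = dual_fun N \<theta> w l * (w $ i * (c + real (N - sum l UNIV) - 1) / last_coord w / (c + real (l i)))"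
proof -
  have "N - sum (l(i := l i + 1)) UNIV = (N - sum l UNIV) - 1"
    using sum_fun_upd[of l i "l i + 1"] by simp
  moreover have "gamma_weight c (last_coord w) (N - sum l UNIV - 1)
      = gamma_weight c (last_coord w) (N - sum l UNIV) * (c + real (N - sum l UNIV) - 1) / last_coord w"
    using gamma_weight_pred[OF c_pos _ last_coord_nonzero, of "N - sum l UNIV"] assms by simp
  ultimately show ?thesis
    unfolding dual_fun_split coord_weight_inc
    by (simp only: ac_simps times_divide_eq_left times_divide_eq_right divide_divide_eq_left)
qed

lemma dual_fun_down:
  assumes "l i \<ge> 1" "sum l UNIV \<le> N"
  shows "dual_fun N \<theta> w (l(i := l i - 1))
    = dual_fun N \<theta> w l * ((c + real (l i) - 1) * last_coord w / w $ i / (c + real (N - sum l UNIV)))"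
proof -
  have "N - sum (l(i := l i - 1)) UNIV = Suc (N - sum l UNIV)"
    using sum_fun_upd[of l i "l i - 1"] assms by simp
  then show ?thesis
    unfolding dual_fun_split coord_weight_dec[of l i, OF assms(1)]
    by (simp only: gamma_weight_Suc[OF c_pos] ac_simps times_divide_eq_left times_divide_eq_right
        divide_divide_eq_left)
qed

lemma wf_gen_dual_fun:
  fixes l :: "'n \<Rightarrow> nat"
  defines "F \<equiv> \<lambda>i. real (l i) / w $ i - real (N - sum l UNIV) / last_coord w"
  defines "E \<equiv> \<lambda>i j. F i * F j - (if i = j then real (l i) / (w $ i)^2 else 0)
                     - real (N - sum l UNIV) / (last_coord w)^2"
  shows "wf_gen \<theta> (\<lambda>y. dual_fun N \<theta> y l) w = dual_fun N \<theta> w l *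
     ((\<Sum>i\<in>UNIV. 1/2 * w $ i * (1 - w $ i) * E i i) - (\<Sum>(i,j)\<in>{(i,j). i < j}. w $ i * w $ j * E i j)
      + \<theta> / (real (CARD('n) + 1) - 1) * (\<Sum>i\<in>UNIV. (1 - real (CARD('n) + 1) * w $ i) * F i))"
proof -
  obtain C where C: "(\<lambda>y. dual_fun N \<theta> y l) = (\<lambda>y. C * full_monomial l (N - sum l UNIV) y)"
    using dual_fun_eq_scaled_full_monomial by blast
  note poly = poly_fun_full_monomial[of l "N - sum l UNIV"]
  note at_w = fun_cong[OF C, of w]
  have "part i (\<lambda>y. dual_fun N \<theta> y l) w = dual_fun N \<theta> w l * F i" for i
    unfolding C part_cmult[OF poly] part_full_monomial_generic[OF coord_nonzero last_coord_nonzero] F_def at_w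
    by simp
  moreover have "part i (part j (\<lambda>y. dual_fun N \<theta> y l)) w = dual_fun N \<theta> w l * E i j" for i j
    unfolding C part_cmult[OF poly] part_cmult[OF poly_fun_part[OF poly]]
      part_part_full_monomial_generic[OF coord_nonzero last_coord_nonzero] E_def F_def at_w
    by simp
  ultimately show ?thesis
    unfolding wf_gen_def Let_def by (simp add: sum_distrib_left split_def algebra_simps)
qed

lemma increment_rate_ratio:
  "a * (real e + c) * (D * (q / (c + real e)) - D) = D * (a * q - a * (real e + c))"
proof -
  have "c + real e \<noteq> 0" using c_pos by simp
  then show ?thesis by (simp add: field_simps)
qed

lemma moran_move_increment:
  assumes "i \<noteq> j"
  shows "real (l i) * (real (l j) + c) * (dual_fun N \<theta> w (l(i := l i - 1, j := l j + 1)) - dual_fun N \<theta> w l)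
    = dual_fun N \<theta> w l * (real (l i) * (c + real (l i) - 1) * w $ j / w $ i - real (l i) * (real (l j) + c))"
proof (cases "l i = 0")
  case False
  then have li: "l i \<ge> 1" by simp
  show ?thesis unfolding dual_fun_move[of i j l, OF assms li] increment_rate_ratio by simp
qed simp

lemma moran_up_increment:
  assumes "sum l UNIV \<le> N"
  defines "b \<equiv> real (N - sum l UNIV)"
  shows "b * (real (l i) + c) * (dual_fun N \<theta> w (l(i := l i + 1)) - dual_fun N \<theta> w l)
    = dual_fun N \<theta> w l * (b * (c + b - 1) * w $ i / last_coord w - b * (real (l i) + c))"
proof (cases "sum l UNIV = N")
  case False
  then show ?thesis
    unfolding dual_fun_up[OF le_neq_trans[OF assms(1) False]] mult.commute[of b] increment_rate_ratio b_def
    by (simp add: algebra_simps)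
qed (simp add: b_def)

lemma moran_down_increment:
  assumes "sum l UNIV \<le> N"
  defines "b \<equiv> real (N - sum l UNIV)"
  shows "real (l i) * (b + c) * (dual_fun N \<theta> w (l(i := l i - 1)) - dual_fun N \<theta> w l)
    = dual_fun N \<theta> w l * (real (l i) * (c + real (l i) - 1) * last_coord w / w $ i - real (l i) * (b + c))"
proof (cases "l i = 0")
  case False
  then have li: "l i \<ge> 1" by simp
  show ?thesis unfolding dual_fun_down[of l i, OF li assms(1)] b_def increment_rate_ratio by simp
qed simp

lemma moran_gen_dual_fun:
  fixes l :: "'n \<Rightarrow> nat"
  assumes l: "sum l UNIV \<le> N"
  defines "b \<equiv> real (N - sum l UNIV)"
  defines "X \<equiv> \<lambda>i j. real (l i) * (c + real (l i) - 1) * w $ j / w $ i - real (l i) * (real (l j) + c)"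
  defines "Y \<equiv> \<lambda>i. b * (c + b - 1) * w $ i / last_coord w - b * (real (l i) + c)"
  defines "Z \<equiv> \<lambda>i. real (l i) * (c + real (l i) - 1) * last_coord w / w $ i - real (l i) * (b + c)"
  shows "moran_gen N \<theta> (\<lambda>m. dual_fun N \<theta> w m) l = dual_fun N \<theta> w l *
     (1/2 * (\<Sum>(i,j)\<in>{(i,j). i < j}. X i j + X j i) + 1/2 * (\<Sum>i\<in>UNIV. Y i + Z i))"
proof -
  have swap: "l(i := l i + 1, j := l j - 1) = l(j := l j - 1, i := l i + 1)" if "i < j" for i j
    using that by (auto simp: fun_eq_iff)
  have "(\<Sum>(i,j)\<in>{(i,j). i < j}.
        real (l i) * (real (l j) + c) * (dual_fun N \<theta> w (l(i := l i - 1, j := l j + 1)) - dual_fun N \<theta> w l)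
      + real (l j) * (real (l i) + c) * (dual_fun N \<theta> w (l(i := l i + 1, j := l j - 1)) - dual_fun N \<theta> w l))
      = (\<Sum>(i,j)\<in>{(i,j). i < j}. dual_fun N \<theta> w l * X i j + dual_fun N \<theta> w l * X j i)"
    unfolding X_def
    by (intro sum.cong refl) (clarsimp simp only: mem_Collect_eq case_prod_conv swap
        moran_move_increment[OF less_imp_neq] moran_move_increment[OF less_imp_neq[symmetric]])
  also have "\<dots> = dual_fun N \<theta> w l * (\<Sum>(i,j)\<in>{(i,j). i < j}. X i j + X j i)"
    by (simp add: sum_distrib_left distrib_left split_def)
  finally have pairs: "(\<Sum>(i,j)\<in>{(i,j). i < j}.
        real (l i) * (real (l j) + c) * (dual_fun N \<theta> w (l(i := l i - 1, j := l j + 1)) - dual_fun N \<theta> w l)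
      + real (l j) * (real (l i) + c) * (dual_fun N \<theta> w (l(i := l i + 1, j := l j - 1)) - dual_fun N \<theta> w l))
      = dual_fun N \<theta> w l * (\<Sum>(i,j)\<in>{(i,j). i < j}. X i j + X j i)" .
  have singles: "(\<Sum>i\<in>UNIV.
        b * (real (l i) + c) * (dual_fun N \<theta> w (l(i := l i + 1)) - dual_fun N \<theta> w l)
      + real (l i) * (b + c) * (dual_fun N \<theta> w (l(i := l i - 1)) - dual_fun N \<theta> w l))
      = dual_fun N \<theta> w l * (\<Sum>i\<in>UNIV. Y i + Z i)"
    unfolding Y_def Z_def b_def moran_up_increment[OF l] moran_down_increment[OF l]
    by (simp only: sum_distrib_left distrib_left)
  have b: "real N - real (sum l UNIV) = b" using l by (simp add: b_def)
  have c: "2 * \<theta> / (real (CARD('n) + 1) - 1) = c" unfolding c_eq by simp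
  show ?thesis
    unfolding moran_gen_def Let_def b c pairs singles by (simp add: algebra_simps)
qed

lemma wf_gen_dual_fun_eq_moran_gen_generic:
  assumes "sum l UNIV \<le> N"
  shows "wf_gen \<theta> (\<lambda>y. dual_fun N \<theta> y l) w = moran_gen N \<theta> (\<lambda>m. dual_fun N \<theta> w m) l"
  unfolding wf_gen_dual_fun moran_gen_dual_fun[OF assms]
  using log_generators_agree[of "\<lambda>i. w $ i" "last_coord w" "\<lambda>i. real (l i)" "real (N - sum l UNIV)" \<theta>]
    coord_nonzero last_coord_nonzero
  by (simp add: last_coord_def c_eq)

end

lemma eventually_at_right_affine_nonzero:
  "\<beta> \<noteq> 0 \<Longrightarrow> eventually (\<lambda>e. \<alpha> + \<beta> * e \<noteq> (0::real)) (at_right 0)"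
  using eventually_neq_at_within[of "- \<alpha> / \<beta>" 0 "{0<..}"]
  by (rule eventually_mono) (auto simp: field_simps)

lemma continuous_eq_off_hyperplanes:
  fixes f g :: "real ^ 'n::finite \<Rightarrow> 'b::t2_space"
  assumes "continuous_on UNIV f" "continuous_on UNIV g"
    and generic: "\<And>v. (\<And>i. v $ i \<noteq> 0) \<Longrightarrow> last_coord v \<noteq> 0 \<Longrightarrow> f v = g v"
  shows "f w = g w"
proof -
  define v where "v e = w + e *\<^sub>R (\<chi> i. 1)" for e :: real
  have "eventually (\<lambda>e. (\<forall>i. v e $ i \<noteq> 0) \<and> last_coord (v e) \<noteq> 0) (at_right 0)"
  proof -
    have "v e $ i = w $ i + 1 * e" "last_coord (v e) = last_coord w + (- real CARD('n)) * e" for e i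
      by (simp_all add: v_def last_coord_def sum.distrib)
    then show ?thesis
      by (simp only:) (intro eventually_conj eventually_all_finite eventually_at_right_affine_nonzero; simp)
  qed
  then have "eventually (\<lambda>e. f (v e) = g (v e)) (at_right 0)"
    by (rule eventually_mono) (use generic in blast)
  moreover have "(v \<longlongrightarrow> w) (at_right 0)"
    unfolding v_def by (intro tendsto_eq_intros) auto
  then have "((\<lambda>e. f (v e)) \<longlongrightarrow> f w) (at_right 0)" "((\<lambda>e. g (v e)) \<longlongrightarrow> g w) (at_right 0)"
    using assms(1,2) by (auto intro: isCont_tendsto_compose simp: continuous_on_eq_continuous_at)
  ultimately show ?thesis
    by (metis (mono_tags) tendsto_cong tendsto_unique trivial_limit_at_right_real)
qed

lemma continuous_on_moran_gen_dual_fun: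
  "continuous_on S (\<lambda>w. moran_gen N \<theta> (\<lambda>m. dual_fun N \<theta> w m) l)"
proof -
  have "continuous_on S (\<lambda>w. dual_fun N \<theta> w m)" for m
    using poly_fun_continuous[OF poly_fun_dual_fun] .
  then show ?thesis
    unfolding moran_gen_def Let_def split_def by (intro continuous_intros)
qed

lemma wf_gen_dual_fun_eq_moran_gen:
  fixes l :: "'n::{finite,linorder} \<Rightarrow> nat"
  assumes "\<theta> > 0" and "sum l UNIV \<le> N"
  shows "wf_gen \<theta> (\<lambda>y. dual_fun N \<theta> y l) w = moran_gen N \<theta> (\<lambda>m. dual_fun N \<theta> w m) l"
proof (rule continuous_eq_off_hyperplanes)
  fix v :: "real ^ 'n::{finite,linorder}"
  assume "\<And>i. v $ i \<noteq> 0" "last_coord v \<noteq> 0"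
  then interpret generic_point N \<theta> "2 * \<theta> / real CARD('n)" v
    using assms(1) by unfold_locales auto
  show "wf_gen \<theta> (\<lambda>y. dual_fun N \<theta> y l) v = moran_gen N \<theta> (\<lambda>m. dual_fun N \<theta> v m) l"
    using wf_gen_dual_fun_eq_moran_gen_generic[OF assms(2)] .
qed (intro poly_fun_continuous poly_fun_wf_gen poly_fun_dual_fun continuous_on_moran_gen_dual_fun)+

section \<open>Duality from the forward equation\<close>

lemma moran_gen_add: "moran_gen N \<theta> (\<lambda>m. g1 m + g2 m) k = moran_gen N \<theta> g1 k + moran_gen N \<theta> g2 k"
proof -
  have *: "\<And>A B x1 x2 y1 y2 z1 z2 :: real. A * ((x1 + x2) - (z1 + z2)) + B * ((y1 + y2) - (z1 + z2))
     = (A * (x1 - z1) + B * (y1 - z1)) + (A * (x2 - z2) + B * (y2 - z2))"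
    by (simp add: algebra_simps)
  show ?thesis unfolding moran_gen_def Let_def
    by (simp only: * sum.distrib split_def) (simp add: algebra_simps del: of_nat_sum)
qed

lemma moran_gen_cmult: "moran_gen N \<theta> (\<lambda>m. a * g m) k = a * moran_gen N \<theta> g k"
proof -
  have *: "\<And>A B x y z :: real. A * (a * x - a * z) + B * (a * y - a * z) = a * (A * (x - z) + B * (y - z))"
    by (simp add: algebra_simps)
  show ?thesis unfolding moran_gen_def Let_def
    by (simp only: * sum_distrib_left[symmetric] split_def) (simp add: algebra_simps del: of_nat_sum)
qed

lemma moran_gen_sum:
  "moran_gen N \<theta> (\<lambda>m. \<Sum>l\<in>S. a l * G l m) k = (\<Sum>l\<in>S. a l * moran_gen N \<theta> (G l) k)"
proof (induction S rule: infinite_finite_induct)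
  case (insert x S)
  then show ?case by (simp add: moran_gen_add moran_gen_cmult)
qed (simp_all add: moran_gen_def)

lemma moran_gen_integral:
  assumes "\<And>m. integrable M (F m)"
  shows "(\<integral>y. moran_gen N \<theta> (\<lambda>m. F m y) l \<partial>M) = moran_gen N \<theta> (\<lambda>m. \<integral>y. F m y \<partial>M) l"
  unfolding moran_gen_def Let_def split_def using assms
  by (simp add: integral_sum integral_add integral_diff integrable_sum integrable_add integrable_diff)

lemma moran_gen_local:
  fixes l :: "'n::{finite,linorder} \<Rightarrow> nat"
  assumes l: "l \<in> moran_states N" and eq: "\<And>m. m \<in> moran_states N \<Longrightarrow> g m = g' m"
  shows "moran_gen N \<theta> g l = moran_gen N \<theta> g' l"
proof -
  have N: "sum l UNIV \<le> N" using l by (simp add: moran_states_def)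
  have upd: "l(i := x) \<in> moran_states N" if "sum l UNIV + x \<le> N + l i" for i x
    using sum_fun_upd[of l i x] that unfolding moran_states_def by simp
  have gl: "g l = g' l" using eq l by simp
  have move: "real (l i) * r * (g (l(i := l i - 1, j := l j + 1)) - g l)
      = real (l i) * r * (g' (l(i := l i - 1, j := l j + 1)) - g' l)" if "i \<noteq> j" for i j r
  proof (cases "l i = 0")
    case False
    let ?l = "l(i := l i - 1)"
    have "sum (?l(j := l j + 1)) UNIV + l j = sum ?l UNIV + (l j + 1)"
      using sum_fun_upd[of ?l j "l j + 1"] that by simp
    moreover have "sum ?l UNIV + l i = sum l UNIV + (l i - 1)" by (rule sum_fun_upd)
    ultimately have "?l(j := l j + 1) \<in> moran_states N"
      using False N unfolding moran_states_def by simp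
    then show ?thesis using eq gl by simp
  qed simp
  have up: "(real N - real (sum l UNIV)) * r * (g (l(i := l i + 1)) - g l)
      = (real N - real (sum l UNIV)) * r * (g' (l(i := l i + 1)) - g' l)" for i r
    using N gl eq[OF upd[where i=i and x="l i + 1"]] by (cases "sum l UNIV = N") simp_all
  have down: "real (l i) * r * (g (l(i := l i - 1)) - g l) = real (l i) * r * (g' (l(i := l i - 1)) - g' l)" for i r
    using N gl eq[OF upd[where i=i and x="l i - 1"]] by simp
  show ?thesis
    unfolding moran_gen_def Let_def
  proof (intro arg_cong2[where f="\<lambda>a b. 1/2 * a + 1/2 * b"] sum.cong refl, goal_cases)
    case (1 x)
    then obtain i j where x: "x = (i, j)" and "i < j" by auto
    then have ij: "i \<noteq> j" and ji: "j \<noteq> i" by auto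
    have twist: "l(i := l i + 1, j := l j - 1) = l(j := l j - 1, i := l i + 1)"
      using ij by (rule fun_upd_twist)
    show ?case unfolding x case_prod_conv twist move[OF ij] move[OF ji] ..
  next
    case (2 i)
    show ?case by (simp only: up down)
  qed
qed

lemma finite_moran_states: "finite (moran_states N :: ('n::{finite,linorder} \<Rightarrow> nat) set)"
proof (rule finite_subset)
  show "moran_states N \<subseteq> (PiE UNIV (\<lambda>_. {..N}) :: ('n \<Rightarrow> nat) set)"
  proof
    fix k :: "'n \<Rightarrow> nat" assume "k \<in> moran_states N"
    then have "k i \<le> N" for i
      using member_le_sum[of i UNIV k] by (simp add: moran_states_def)
    then show "k \<in> PiE UNIV (\<lambda>_. {..N})" by (simp add: PiE_UNIV_domain)
  qed
qed (simp add: finite_PiE)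

lemma expectation_moran_states:
  assumes "set_pmf q \<subseteq> moran_states N"
  shows "measure_pmf.expectation q g = (\<Sum>m\<in>moran_states N. pmf q m * g m)"
  using integral_measure_pmf[OF finite_moran_states, of q g] assms by (auto simp: mult.commute)

lemma Moran_model_pmf_deriv:
  assumes "is_Moran_model N \<theta> p" "k \<in> moran_states N" "r \<ge> 0"
  shows "((\<lambda>r. pmf (p r k) l) has_real_derivative
           measure_pmf.expectation (p r k) (moran_gen N \<theta> (indicator {l}))) (at r within {0..})"
proof -
  have "((\<lambda>r. measure_pmf.expectation (p r k) (indicator {l})) has_real_derivative
      measure_pmf.expectation (p r k) (moran_gen N \<theta> (indicator {l}))) (at r within {0..})"
    using assms unfolding is_Moran_model_def by blast
  then show ?thesis by (simp add: measure_pmf_single)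
qed

text \<open>The Moran generator acting on indicator functions is the transpose of its action on functions.\<close>

lemma sum_expectation_moran_gen_indicator:
  fixes q :: "('n::{finite,linorder} \<Rightarrow> nat) pmf"
  assumes q: "set_pmf q \<subseteq> moran_states N"
  shows "(\<Sum>l\<in>moran_states N. measure_pmf.expectation q (moran_gen N \<theta> (indicator {l})) * u l)
       = measure_pmf.expectation q (moran_gen N \<theta> u)"
proof -
  let ?S = "moran_states N"
  have "(\<Sum>l\<in>?S. measure_pmf.expectation q (moran_gen N \<theta> (indicator {l})) * u l)
      = (\<Sum>m\<in>?S. pmf q m * (\<Sum>l\<in>?S. u l * moran_gen N \<theta> (indicator {l}) m))"
    unfolding expectation_moran_states[OF q] sum_distrib_left sum_distrib_right
    by (subst sum.swap) (simp add: ac_simps)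
  also have "\<dots> = (\<Sum>m\<in>?S. pmf q m * moran_gen N \<theta> u m)"
  proof (intro sum.cong refl arg_cong2[where f="(*)"])
    fix m :: "'n \<Rightarrow> nat" assume "m \<in> ?S"
    then have "moran_gen N \<theta> (\<lambda>m'. \<Sum>l\<in>?S. u l * indicator {l} m') m = moran_gen N \<theta> u m"
      by (intro moran_gen_local) (simp_all add: indicator_def finite_moran_states)
    then show "(\<Sum>l\<in>?S. u l * moran_gen N \<theta> (indicator {l}) m) = moran_gen N \<theta> u m"
      by (simp only: moran_gen_sum)
  qed
  finally show ?thesis unfolding expectation_moran_states[OF q] .
qed

lemma DERIV_within_imp_continuous_on:
  assumes "\<And>r. r \<in> S \<Longrightarrow> (f has_real_derivative f' r) (at r within T)" and "S \<subseteq> T"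
  shows "continuous_on S f"
  unfolding continuous_on_eq_continuous_within
  using assms by (meson DERIV_continuous continuous_within_subset)

lemma Moran_model_interpolation_deriv:
  fixes U :: "real \<Rightarrow> ('n::{finite,linorder} \<Rightarrow> nat) \<Rightarrow> real"
  assumes M: "is_Moran_model N \<theta> p" and k: "k \<in> moran_states N"
    and U: "\<And>l s. l \<in> moran_states N \<Longrightarrow> s \<ge> 0 \<Longrightarrow>
              ((\<lambda>r. U r l) has_real_derivative moran_gen N \<theta> (U s) l) (at s within {0..})"
    and s: "0 < s" "s < t"
  shows "((\<lambda>s. \<Sum>l\<in>moran_states N. pmf (p (t - s) k) l * U s l) has_real_derivative 0) (at s)"
proof -
  let ?S = "moran_states N :: ('n \<Rightarrow> nat) set"
  have supp: "set_pmf (p r k) \<subseteq> ?S" if "r \<ge> 0" for r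
    using M k that unfolding is_Moran_model_def by blast
  have at: "at r within {0..} = at r" if "r > 0" for r :: real
    using that by (intro at_within_interior) simp
  let ?G = "\<lambda>l. measure_pmf.expectation (p (t - s) k) (moran_gen N \<theta> (indicator {l}))"
  have "((\<lambda>s. pmf (p (t - s) k) l) has_real_derivative ?G l * (-1)) (at s)" for l
    using Moran_model_pmf_deriv[OF M k, of "t - s" l] s at[of "t - s"]
    by (intro DERIV_chain2[of "\<lambda>r. pmf (p r k) l"]) (auto intro!: derivative_eq_intros)
  moreover have "((\<lambda>r. U r l) has_real_derivative moran_gen N \<theta> (U s) l) (at s)" if "l \<in> ?S" for l
    using U[OF that, of s] s at[of s] by simp
  ultimately have "((\<lambda>s. \<Sum>l\<in>?S. pmf (p (t - s) k) l * U s l) has_real_derivative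
      (\<Sum>l\<in>?S. ?G l * (-1) * U s l + moran_gen N \<theta> (U s) l * pmf (p (t - s) k) l)) (at s)"
    by (intro DERIV_sum DERIV_mult) auto
  moreover have "(\<Sum>l\<in>?S. ?G l * (-1) * U s l + moran_gen N \<theta> (U s) l * pmf (p (t - s) k) l) = 0"
    using sum_expectation_moran_gen_indicator[OF supp, of "t - s" \<theta> "U s"]
      expectation_moran_states[OF supp, of "t - s" "moran_gen N \<theta> (U s)"] s
    by (simp add: sum_subtractf mult.commute)
  ultimately show ?thesis by simp
qed

lemma Moran_model_forward_solution:
  fixes U :: "real \<Rightarrow> ('n::{finite,linorder} \<Rightarrow> nat) \<Rightarrow> real"
  assumes M: "is_Moran_model N \<theta> p" and k: "k \<in> moran_states N" and t: "t > 0"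
    and U: "\<And>l s. l \<in> moran_states N \<Longrightarrow> s \<ge> 0 \<Longrightarrow>
              ((\<lambda>r. U r l) has_real_derivative moran_gen N \<theta> (U s) l) (at s within {0..})"
  shows "U t k = measure_pmf.expectation (p t k) (U 0)"
proof -
  let ?S = "moran_states N :: ('n \<Rightarrow> nat) set"
  define W where "W s = (\<Sum>l\<in>?S. pmf (p (t - s) k) l * U s l)" for s
  have supp: "set_pmf (p r k) \<subseteq> ?S" if "r \<ge> 0" for r
    using M k that unfolding is_Moran_model_def by blast
  have "(W has_real_derivative 0) (at s)" if "0 < s" "s < t" for s
    unfolding W_def using Moran_model_interpolation_deriv[OF M k U that] .
  moreover have "continuous_on {0..t} W"
  proof -
    have "continuous_on {0..t} (\<lambda>r. pmf (p r k) l)" for l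
      using Moran_model_pmf_deriv[OF M k] by (rule DERIV_within_imp_continuous_on) auto
    then have "continuous_on {0..t} (\<lambda>s. pmf (p (t - s) k) l)" for l
      by (rule continuous_on_compose2) (force intro: continuous_on_diff continuous_on_const continuous_on_id)+
    moreover have "continuous_on {0..t} (\<lambda>r. U r l)" if "l \<in> ?S" for l
      using U[OF that] by (rule DERIV_within_imp_continuous_on) auto
    ultimately show ?thesis unfolding W_def by (intro continuous_intros) auto
  qed
  ultimately have "W t = W 0" by (intro DERIV_isconst_end[OF t])
  moreover have "W t = U t k"
  proof -
    have "p 0 k = return_pmf k" using M k unfolding is_Moran_model_def by blast
    then have "W t = (\<Sum>l\<in>?S. if l = k then U t l else 0)"
      unfolding W_def by (intro sum.cong) auto
    then show ?thesis using k by (simp add: finite_moran_states)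
  qed
  moreover have "W 0 = measure_pmf.expectation (p t k) (U 0)"
    unfolding W_def expectation_moran_states[OF supp[OF less_imp_le[OF t]]] by (simp add: mult.commute)
  ultimately show ?thesis by simp
qed

lemma WF_diffusion_dual_moments_deriv:
  assumes "\<theta> > 0" and WF: "is_WF_diffusion \<theta> P" and x: "x \<in> wf_simplex"
    and l: "l \<in> moran_states N" and s: "s \<ge> 0"
  shows "((\<lambda>r. \<integral>y. dual_fun N \<theta> y l \<partial>P r x) has_real_derivative
           moran_gen N \<theta> (\<lambda>m. \<integral>y. dual_fun N \<theta> y m \<partial>P s x) l) (at s within {0..})"
proof -
  have "wf_gen \<theta> (\<lambda>y. dual_fun N \<theta> y l) = (\<lambda>w. moran_gen N \<theta> (\<lambda>m. dual_fun N \<theta> w m) l)"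
    using l by (intro ext wf_gen_dual_fun_eq_moran_gen[OF assms(1)]) (simp add: moran_states_def)
  then have "(\<integral>y. wf_gen \<theta> (\<lambda>y. dual_fun N \<theta> y l) y \<partial>P s x)
      = (\<integral>y. moran_gen N \<theta> (\<lambda>m. dual_fun N \<theta> y m) l \<partial>P s x)"
    by simp
  also have "\<dots> = moran_gen N \<theta> (\<lambda>m. \<integral>y. dual_fun N \<theta> y m \<partial>P s x) l"
    by (intro moran_gen_integral WF_diffusion_integrable[OF WF x s] poly_fun_dual_fun)
  finally show ?thesis
    using WF_diffusion_poly_deriv[OF WF x s poly_fun_dual_fun[of N \<theta> l]] by simp
qed

theorem theorem5p1:
  fixes \<theta> :: real and N :: nat
    and P :: "real \<Rightarrow> real ^ 'n::{finite,linorder} \<Rightarrow> (real ^ 'n::{finite,linorder}) measure"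
    and p :: "real \<Rightarrow> ('n::{finite,linorder} \<Rightarrow> nat) \<Rightarrow> ('n::{finite,linorder} \<Rightarrow> nat) pmf"
  assumes "\<theta> > 0" and "N > 0"
    and "is_WF_diffusion \<theta> P"
    and "is_Moran_model N \<theta> p"
    and "x \<in> wf_simplex" and "k \<in> moran_states N" and "t > 0"
  shows "(\<integral>y. dual_fun N \<theta> y k \<partial>P t x)
         = measure_pmf.expectation (p t k) (\<lambda>l. dual_fun N \<theta> x l)"
proof -
  define U where "U s l = (\<integral>y. dual_fun N \<theta> y l \<partial>P s x)" for s l
  have "U t k = measure_pmf.expectation (p t k) (U 0)"
    using assms(4,6,7) unfolding U_def
    by (rule Moran_model_forward_solution) (rule WF_diffusion_dual_moments_deriv[OF assms(1,3,5)])
  moreover have "U 0 = (\<lambda>l. dual_fun N \<theta> x l)"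
  proof
    fix l :: "'n \<Rightarrow> nat"
    have "(\<lambda>y. dual_fun N \<theta> y l) \<in> borel_measurable borel"
      by (intro borel_measurable_continuous_onI poly_fun_continuous poly_fun_dual_fun)
    then show "U 0 l = dual_fun N \<theta> x l"
      using assms(3,5) unfolding U_def is_WF_diffusion_def by (simp add: integral_return)
  qed
  ultimately show ?thesis unfolding U_def by simp
qed

end
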